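(* For all closed closures $(t,e)$ and $(s,d)$, $(t, e) \approx_{\mathrm{app}} (s, d)$ if and only if $\langle t, e, []\rangle_{\mathrm{ev}} \approx \langle s, d, []\rangle_{\mathrm{ev}}$, where $\approx$ is machine bisimilarity on configurations of the AB machine.
   Context: De Bruijn terms $t,s ::= n \mid t\,s \mid \lambda.t$ ($n\in\mathbb N$); closures $\sigma ::= (t,e)$; environments $e,d ::= \sigma :: e \mid \varepsilon$; stacks $\pi ::= \sigma::\pi \mid []$; application stacks $\rho ::= (t,\kappa)::\rho \mid \epsilon$ with $\kappa\in\mathbb N$. A term is closed if it has no free indices; a closure $(t,e)$ is closed if the length of $e$ exceeds the largest free index of $t$ and all closures in $e$ are closed. AB machine configurations: $\langle t, e, \pi\rangle_{\mathrm{ev}}$, $\langle n, \rho, \sigma\rangle_{\mathrm{ind}}$, $\langle t, \kappa, \rho, \sigma\rangle_{\mathrm{tm}}$. Transitions (labelled by $\tau$ or by a flag): $\langle t\,s, e, \pi\rangle_{\mathrm{ev}} \xrightarrow\tau \langle t, e, (s,e)::\pi\rangle_{\mathrm{ev}}$; $\langle 0, (t,e)::d, \pi\rangle_{\mathrm{ev}}\xrightarrow\tau\langle t,e,\pi\rangle_{\mathrm{ev}}$; $\langle n+1, (t,e)::d,\pi\rangle_{\mathrm{ev}} \xrightarrow\tau\langle n, d,\pi\rangle_{\mathrm{ev}}$; $\langle\lambda.t, e, \sigma::\pi\rangle_{\mathrm{ev}} \xrightarrow\tau \langle t, \sigma::e,\pi\rangle_{\mathrm{ev}}$; $\langle \lambda.t,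 e, []\rangle_{\mathrm{ev}} \xrightarrow{\mathsf{arg}} \langle 0, \epsilon, (t,e)\rangle_{\mathrm{ind}}$; $\langle n,\rho,\sigma\rangle_{\mathrm{ind}}\xrightarrow{\mathsf{suc}}\langle n+1,\rho,\sigma\rangle_{\mathrm{ind}}$; $\langle n,\rho,\sigma\rangle_{\mathrm{ind}}\xrightarrow{\mathsf{var}}\langle n, n+1,\rho,\sigma\rangle_{\mathrm{tm}}$; $\langle t,\kappa+1,\rho,\sigma\rangle_{\mathrm{tm}}\xrightarrow{\mathsf{lam}}\langle\lambda.t,\kappa,\rho,\sigma\rangle_{\mathrm{tm}}$; $\langle t,0,\rho,\sigma\rangle_{\mathrm{tm}}\xrightarrow{\mathsf{lam}}\langle\lambda.t,0,\rho,\sigma\rangle_{\mathrm{tm}}$; $\langle t,\kappa,\rho,\sigma\rangle_{\mathrm{tm}}\xrightarrow{\mathsf{appfun}}\langle 0, (t,\kappa)::\rho,\sigma\rangle_{\mathrm{ind}}$; $\langle s,\kappa_1,(t,\kappa_2)::\rho,\sigma\rangle_{\mathrm{tm}}\xrightarrow{\mathsf{app}}\langle t\,s,\max(\kappa_1,\kappa_2),\rho,\sigma\rangle_{\mathrm{tm}}$; $\langle t, 0, \epsilon, (s,e)\rangle_{\mathrm{tm}}\xrightarrow{\mathsf{done}}\langle s, (t,\varepsilon)::e, []\rangle_{\mathrm{ev}}$. The $\tau$-transitions alone form the (environment-based) KAM, written $\to_\tau$. Applicative bisimulation: a symmetric relation $\mathcal R$ on closed closures such that $(t,e)\mathcal R(s,d)$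 and $\langle t,e,[]\rangle_{\mathrm{ev}}\xrightarrow\tau^*\langle\lambda.t',e',[]\rangle_{\mathrm{ev}}$ imply there exist $s',d'$ with $\langle s,d,[]\rangle_{\mathrm{ev}}\xrightarrow\tau^*\langle\lambda.s',d',[]\rangle_{\mathrm{ev}}$ and, for all closed terms $t''$, $(t',(t'',\varepsilon)::e')\,\mathcal R\,(s',(t'',\varepsilon)::d')$. $\approx_{\mathrm{app}}$ is the largest applicative bisimulation. Machine bisimulation: a symmetric relation $\mathcal R$ on configurations such that $C_1\mathcal RC_2$ implies, for every flag $F$: if $C_1\xrightarrow\tau^*\xrightarrow F C_1'$ then $C_2\xrightarrow\tau^*\xrightarrow F C_2'$ for some $C_2'$ with $C_1'\mathcal RC_2'$; and if $C_1\xrightarrow\tau^*\xrightarrow F$ by a terminating transition, then so does $C_2$. $\approx$ is the largest machine bisimulation. *)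

theory Defs
  imports Main
begin

datatype tm = DVar nat | DApp tm tm | DLam tm

text \<open>A closure (t,e); environments are lists of closures (head = index 0).\<close>
datatype clo = Clo tm "clo list"

type_synonym env = "clo list"
type_synonym stack = "clo list"
type_synonym astack = "(tm \<times> nat) list"

fun closed_at :: "nat \<Rightarrow> tm \<Rightarrow> bool" where
  "closed_at n (DVar k) = (k < n)"
| "closed_at n (DApp t s) = (closed_at n t \<and> closed_at n s)"
| "closed_at n (DLam t) = closed_at (Suc n) t"

definition closed_tm :: "tm \<Rightarrow> bool" where
  "closed_tm t = closed_at 0 t"

inductive closed_clo :: "clo \<Rightarrow> bool" where
  "closed_at (length e) t \<Longrightarrow> (\<forall>c\<in>set e. closed_clo c) \<Longrightarrow> closed_clo (Clo t e)"

datatype conf =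
    Ev tm env stack
  | Ind nat astack clo
  | Tmc tm nat astack clo

datatype flag = FArg | FSuc | FVar | FLam | FAppFun | FApp | FDone

datatype label = Tau | Lbl flag

text \<open>Transitions; the target \<open>None\<close> would denote a terminating transition
  (the AB machine has none).\<close>
inductive step :: "conf \<Rightarrow> label \<Rightarrow> conf option \<Rightarrow> bool" where
  ev_app: "step (Ev (DApp t s) e \<pi>) Tau (Some (Ev t e (Clo s e # \<pi>)))"
| ev_zero: "step (Ev (DVar 0) (Clo t e # d) \<pi>) Tau (Some (Ev t e \<pi>))"
| ev_suc: "step (Ev (DVar (Suc n)) (Clo t e # d) \<pi>) Tau (Some (Ev (DVar n) d \<pi>))"
| ev_lam: "step (Ev (DLam t) e (\<sigma> # \<pi>)) Tau (Some (Ev t (\<sigma> # e) \<pi>))"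
| st_arg: "step (Ev (DLam t) e []) (Lbl FArg) (Some (Ind 0 [] (Clo t e)))"
| st_suc: "step (Ind n \<rho> \<sigma>) (Lbl FSuc) (Some (Ind (Suc n) \<rho> \<sigma>))"
| st_var: "step (Ind n \<rho> \<sigma>) (Lbl FVar) (Some (Tmc (DVar n) (Suc n) \<rho> \<sigma>))"
| lam_suc: "step (Tmc t (Suc \<kappa>) \<rho> \<sigma>) (Lbl FLam) (Some (Tmc (DLam t) \<kappa> \<rho> \<sigma>))"
| lam_zero: "step (Tmc t 0 \<rho> \<sigma>) (Lbl FLam) (Some (Tmc (DLam t) 0 \<rho> \<sigma>))"
| appfun: "step (Tmc t \<kappa> \<rho> \<sigma>) (Lbl FAppFun) (Some (Ind 0 ((t, \<kappa>) # \<rho>) \<sigma>))"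
| st_app: "step (Tmc s \<kappa>1 ((t, \<kappa>2) # \<rho>) \<sigma>) (Lbl FApp) (Some (Tmc (DApp t s) (max \<kappa>1 \<kappa>2) \<rho> \<sigma>))"
| st_done: "step (Tmc t 0 [] (Clo s e)) (Lbl FDone) (Some (Ev s (Clo t [] # e) []))"

definition tau_step :: "conf \<Rightarrow> conf \<Rightarrow> bool" where
  "tau_step C C' = step C Tau (Some C')"

abbreviation tau_star :: "conf \<Rightarrow> conf \<Rightarrow> bool" where
  "tau_star \<equiv> tau_step\<^sup>*\<^sup>*"

definition app_bisimulation :: "(clo \<Rightarrow> clo \<Rightarrow> bool) \<Rightarrow> bool" where
  "app_bisimulation R \<longleftrightarrow>
     (\<forall>x y. R x y \<longrightarrow> R y x) \<and>
     (\<forall>x y. R x y \<longrightarrow> closed_clo x \<and> closed_clo y) \<and>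
     (\<forall>t e s d t' e'. R (Clo t e) (Clo s d) \<longrightarrow>
        tau_star (Ev t e []) (Ev (DLam t') e' []) \<longrightarrow>
        (\<exists>s' d'. tau_star (Ev s d []) (Ev (DLam s') d' []) \<and>
           (\<forall>t''. closed_tm t'' \<longrightarrow>
              R (Clo t' (Clo t'' [] # e')) (Clo s' (Clo t'' [] # d')))))"

definition app_bisim :: "clo \<Rightarrow> clo \<Rightarrow> bool" where
  "app_bisim x y \<longleftrightarrow> (\<exists>R. app_bisimulation R \<and> R x y)"

definition mach_bisimulation :: "(conf \<Rightarrow> conf \<Rightarrow> bool) \<Rightarrow> bool" where
  "mach_bisimulation R \<longleftrightarrow>
     (\<forall>x y. R x y \<longrightarrow> R y x) \<and>
     (\<forall>C1 C2 F. R C1 C2 \<longrightarrow>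
        (\<forall>C1' C1''. tau_star C1 C1' \<longrightarrow> step C1' (Lbl F) (Some C1'') \<longrightarrow>
           (\<exists>C2' C2''. tau_star C2 C2' \<and> step C2' (Lbl F) (Some C2'') \<and> R C1'' C2'')) \<and>
        (\<forall>C1'. tau_star C1 C1' \<longrightarrow> step C1' (Lbl F) None \<longrightarrow>
           (\<exists>C2'. tau_star C2 C2' \<and> step C2' (Lbl F) None)))"

definition mach_bisim :: "conf \<Rightarrow> conf \<Rightarrow> bool" where
  "mach_bisim x y \<longleftrightarrow> (\<exists>R. mach_bisimulation R \<and> R x y)"

end

theory Submission
  imports Defs
begin

text \<open>
  (\<open>\<Rightarrow>\<close>) Applicative bisimilarity lifts to a machine bisimulation: relate the initial
  configurations of applicatively bisimilar closures, and during the read-back phase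
  (\<open>ind\<close>/\<open>tm\<close> configurations) relate configurations that agree on the term under
  construction and whose stored closures are bisimilar under every closed argument.
  Closedness of the partial terms guarantees that \<open>done\<close> only ever passes a closed argument.

  (\<open>\<Leftarrow>\<close>) Once the \<open>arg\<close> flag has been matched, both machines are in \<tau>-free,
  deterministic read-back configurations, so bisimilarity is preserved along any flag
  sequence. The flag sequence writing a closed term \<open>u\<close> ends with \<open>\<kappa> = 0\<close>, and \<open>done\<close> then
  yields bisimilar initial configurations applied to \<open>u\<close>.
\<close>

lemma no_terminating_step: "\<not> step C l None"
  by (auto elim: step.cases)

lemma step_deterministic: "step C l X \<Longrightarrow> step C l Y \<Longrightarrow> X = Y"
  by (induct rule: step.induct) (auto elim: step.cases)

lemma tau_star_Ind: "tau_star (Ind n \<rho> \<sigma>) C \<Longrightarrow> C = Ind n \<rho> \<sigma>"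
  by (erule converse_rtranclpE) (auto simp: tau_step_def elim: step.cases)

lemma tau_star_Tmc: "tau_star (Tmc u \<kappa> \<rho> \<sigma>) C \<Longrightarrow> C = Tmc u \<kappa> \<rho> \<sigma>"
  by (erule converse_rtranclpE) (auto simp: tau_step_def elim: step.cases)

lemma tau_star_Ev: "tau_star (Ev t e \<pi>) C \<Longrightarrow> \<exists>t' e' \<pi>'. C = Ev t' e' \<pi>'"
  by (induct rule: rtranclp_induct) (auto simp: tau_step_def elim: step.cases)

lemma closed_clo_Clo_iff [simp]:
  "closed_clo (Clo t e) \<longleftrightarrow> closed_at (length e) t \<and> (\<forall>c\<in>set e. closed_clo c)"
  by (auto elim: closed_clo.cases intro: closed_clo.intros)

lemma closed_at_mono: "closed_at n u \<Longrightarrow> n \<le> m \<Longrightarrow> closed_at m u"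
  by (induct u arbitrary: n m) auto

fun closed_conf :: "conf \<Rightarrow> bool" where
  "closed_conf (Ev t e \<pi>) \<longleftrightarrow> closed_clo (Clo t e) \<and> (\<forall>c\<in>set \<pi>. closed_clo c)"
| "closed_conf (Ind n \<rho> \<sigma>) \<longleftrightarrow> closed_clo \<sigma>"
| "closed_conf (Tmc u \<kappa> \<rho> \<sigma>) \<longleftrightarrow> closed_clo \<sigma>"

lemma tau_star_closed_conf: "tau_star C C' \<Longrightarrow> closed_conf C \<Longrightarrow> closed_conf C'"
proof (induct rule: rtranclp_induct)
  case (step C' C'')
  then show ?case
    by (auto simp: tau_step_def elim!: step.cases)
qed

lemma closed_clo_value:
  assumes "closed_clo (Clo t e)" and "tau_star (Ev t e []) (Ev (DLam t') e' [])" and "closed_tm u"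
  shows "closed_clo (Clo t' (Clo u [] # e'))"
  using tau_star_closed_conf[OF assms(2)] assms(1,3) by (simp add: closed_tm_def)

lemma mach_bisim_sym: "mach_bisim C1 C2 \<Longrightarrow> mach_bisim C2 C1"
  unfolding mach_bisim_def mach_bisimulation_def by blast

lemma mach_bisim_labelled_step:
  assumes "mach_bisim C1 C2" and "tau_star C1 C1'" and "step C1' (Lbl F) (Some C1'')"
  shows "\<exists>C2' C2''. tau_star C2 C2' \<and> step C2' (Lbl F) (Some C2'') \<and> mach_bisim C1'' C2''"
proof -
  obtain R where R: "mach_bisimulation R" "R C1 C2"
    using assms(1) mach_bisim_def by blast
  then obtain C2' C2'' where "tau_star C2 C2'" "step C2' (Lbl F) (Some C2'')" "R C1'' C2''"
    using assms(2,3) unfolding mach_bisimulation_def by blast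
  with R(1) show ?thesis
    unfolding mach_bisim_def by blast
qed

lemma mach_bisim_step_tau_free:
  assumes "mach_bisim C1 C2" and "step C1 (Lbl F) (Some C1')" and "step C2 (Lbl F) (Some C2')"
    and "\<And>C. tau_star C2 C \<Longrightarrow> C = C2"
  shows "mach_bisim C1' C2'"
  using mach_bisim_labelled_step[OF assms(1) rtranclp.rtrancl_refl assms(2)] assms(3,4)
    step_deterministic by blast

text \<open>The index \<open>\<kappa>\<close> that the machine attaches to a term it has written: the least
  \<open>n\<close> with \<open>closed_at n\<close>.\<close>

fun min_scope :: "tm \<Rightarrow> nat" where
  "min_scope (DVar n) = Suc n"
| "min_scope (DApp t s) = max (min_scope s) (min_scope t)"
| "min_scope (DLam t) = min_scope t - 1"

lemma min_scope_le: "closed_at n u \<Longrightarrow> min_scope u \<le> n"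
  by (induct u arbitrary: n) fastforce+

lemma min_scope_closed_tm: "closed_tm u \<Longrightarrow> min_scope u = 0"
  using min_scope_le[of 0 u] by (simp add: closed_tm_def)

lemma mach_bisim_Ind_index:
  assumes "mach_bisim (Ind 0 \<rho> \<sigma>1) (Ind 0 \<rho> \<sigma>2)"
  shows "mach_bisim (Ind n \<rho> \<sigma>1) (Ind n \<rho> \<sigma>2)"
proof (induct n)
  case (Suc n)
  then show ?case
    using mach_bisim_step_tau_free[OF Suc st_suc st_suc] tau_star_Ind by blast
qed (fact assms)

lemma mach_bisim_readback:
  assumes "mach_bisim (Ind 0 \<rho> \<sigma>1) (Ind 0 \<rho> \<sigma>2)"
  shows "mach_bisim (Tmc u (min_scope u) \<rho> \<sigma>1) (Tmc u (min_scope u) \<rho> \<sigma>2)"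
  using assms
proof (induct u arbitrary: \<rho>)
  case (DVar n)
  then show ?case
    using mach_bisim_step_tau_free[OF mach_bisim_Ind_index st_var st_var] tau_star_Ind by simp
next
  case (DApp t s)
  let ?\<rho>' = "(t, min_scope t) # \<rho>"
  have "mach_bisim (Tmc t (min_scope t) \<rho> \<sigma>1) (Tmc t (min_scope t) \<rho> \<sigma>2)"
    using DApp by blast
  then have "mach_bisim (Ind 0 ?\<rho>' \<sigma>1) (Ind 0 ?\<rho>' \<sigma>2)"
    using mach_bisim_step_tau_free[OF _ appfun appfun] tau_star_Tmc by blast
  then have "mach_bisim (Tmc s (min_scope s) ?\<rho>' \<sigma>1) (Tmc s (min_scope s) ?\<rho>' \<sigma>2)"
    by (fact DApp(2))
  then show ?case
    using mach_bisim_step_tau_free[OF _ st_app st_app] tau_star_Tmc by simp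
next
  case (DLam t)
  then have IH: "mach_bisim (Tmc t (min_scope t) \<rho> \<sigma>1) (Tmc t (min_scope t) \<rho> \<sigma>2)"
    by blast
  show ?case
  proof (cases "min_scope t")
    case 0
    then show ?thesis
      using mach_bisim_step_tau_free[OF IH[unfolded 0] lam_zero lam_zero] tau_star_Tmc by simp
  next
    case (Suc \<kappa>)
    then show ?thesis
      using mach_bisim_step_tau_free[OF IH[unfolded Suc] lam_suc lam_suc] tau_star_Tmc by simp
  qed
qed

lemma mach_bisim_apply_closed:
  assumes "mach_bisim (Ind 0 [] (Clo t e)) (Ind 0 [] (Clo s d))" and "closed_tm u"
  shows "mach_bisim (Ev t (Clo u [] # e) []) (Ev s (Clo u [] # d) [])"
proof -
  have "mach_bisim (Tmc u 0 [] (Clo t e)) (Tmc u 0 [] (Clo s d))"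
    using mach_bisim_readback[OF assms(1), of u] min_scope_closed_tm[OF assms(2)] by simp
  then show ?thesis
    using mach_bisim_step_tau_free[OF _ st_done st_done] tau_star_Tmc by blast
qed

lemma app_bisim_sym: "app_bisim x y \<Longrightarrow> app_bisim y x"
  unfolding app_bisim_def app_bisimulation_def by blast

lemma app_bisim_value_step:
  assumes "app_bisim (Clo t e) (Clo s d)" and "tau_star (Ev t e []) (Ev (DLam t') e' [])"
  shows "\<exists>s' d'. tau_star (Ev s d []) (Ev (DLam s') d' []) \<and>
    (\<forall>u. closed_tm u \<longrightarrow> app_bisim (Clo t' (Clo u [] # e')) (Clo s' (Clo u [] # d')))"
proof -
  obtain R where R: "app_bisimulation R" "R (Clo t e) (Clo s d)"
    using assms(1) app_bisim_def by blast
  then obtain s' d' where "tau_star (Ev s d []) (Ev (DLam s') d' [])"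
    "\<forall>u. closed_tm u \<longrightarrow> R (Clo t' (Clo u [] # e')) (Clo s' (Clo u [] # d'))"
    using assms(2) unfolding app_bisimulation_def by blast
  with R(1) show ?thesis
    unfolding app_bisim_def by blast
qed

fun app_bisim_on_args :: "clo \<Rightarrow> clo \<Rightarrow> bool" where
  "app_bisim_on_args (Clo t e) (Clo s d) \<longleftrightarrow>
     (\<forall>u. closed_tm u \<longrightarrow> app_bisim (Clo t (Clo u [] # e)) (Clo s (Clo u [] # d)))"

definition closed_astack :: "astack \<Rightarrow> bool" where
  "closed_astack \<rho> \<longleftrightarrow> (\<forall>(t, \<kappa>)\<in>set \<rho>. closed_at \<kappa> t)"

inductive app_bisim_lift :: "conf \<Rightarrow> conf \<Rightarrow> bool" where
  Ev: "app_bisim (Clo t e) (Clo s d) \<Longrightarrow> app_bisim_lift (Ev t e []) (Ev s d [])"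
| Ind: "app_bisim_on_args \<sigma>1 \<sigma>2 \<Longrightarrow> closed_astack \<rho> \<Longrightarrow>
    app_bisim_lift (Ind n \<rho> \<sigma>1) (Ind n \<rho> \<sigma>2)"
| Tmc: "app_bisim_on_args \<sigma>1 \<sigma>2 \<Longrightarrow> closed_astack \<rho> \<Longrightarrow> closed_at \<kappa> u \<Longrightarrow>
    app_bisim_lift (Tmc u \<kappa> \<rho> \<sigma>1) (Tmc u \<kappa> \<rho> \<sigma>2)"

lemma app_bisim_on_args_sym: "app_bisim_on_args \<sigma>1 \<sigma>2 \<Longrightarrow> app_bisim_on_args \<sigma>2 \<sigma>1"
  by (cases \<sigma>1; cases \<sigma>2) (auto intro: app_bisim_sym)

lemma app_bisim_lift_sym: "app_bisim_lift C1 C2 \<Longrightarrow> app_bisim_lift C2 C1"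
  by (induct rule: app_bisim_lift.induct)
    (auto intro: app_bisim_lift.intros app_bisim_sym app_bisim_on_args_sym)

lemma app_bisim_lift_Ev_step:
  assumes "app_bisim (Clo t e) (Clo s d)"
    and "tau_star (Ev t e []) C1" and "step C1 (Lbl F) (Some C1')"
  shows "\<exists>C2 C2'. tau_star (Ev s d []) C2 \<and> step C2 (Lbl F) (Some C2') \<and> app_bisim_lift C1' C2'"
proof -
  obtain t' e' where C1: "C1 = Ev (DLam t') e' []"
    and "F = FArg" and "C1' = Ind 0 [] (Clo t' e')"
    using tau_star_Ev[OF assms(2)] assms(3) by (auto elim: step.cases)
  moreover obtain s' d' where "tau_star (Ev s d []) (Ev (DLam s') d' [])"
    and "app_bisim_on_args (Clo t' e') (Clo s' d')"
    using app_bisim_value_step[OF assms(1) assms(2)[unfolded C1]] by auto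
  moreover have "closed_astack []"
    by (simp add: closed_astack_def)
  ultimately show ?thesis
    by (blast intro: st_arg app_bisim_lift.Ind)
qed

lemma app_bisim_lift_Ind_step:
  assumes "app_bisim_on_args \<sigma>1 \<sigma>2" and "closed_astack \<rho>"
    and "step (Ind n \<rho> \<sigma>1) (Lbl F) (Some C1')"
  shows "\<exists>C2'. step (Ind n \<rho> \<sigma>2) (Lbl F) (Some C2') \<and> app_bisim_lift C1' C2'"
  using assms(3)
proof cases
  case st_suc
  then show ?thesis
    using assms(1,2) step.st_suc app_bisim_lift.Ind by fastforce
next
  case st_var
  then show ?thesis
    using assms(1,2) step.st_var app_bisim_lift.Tmc by fastforce
qed

lemma app_bisim_lift_Tmc_step:
  assumes "app_bisim_on_args \<sigma>1 \<sigma>2" and "closed_astack \<rho>" and "closed_at \<kappa> u"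
    and "step (Tmc u \<kappa> \<rho> \<sigma>1) (Lbl F) (Some C1')"
  shows "\<exists>C2'. step (Tmc u \<kappa> \<rho> \<sigma>2) (Lbl F) (Some C2') \<and> app_bisim_lift C1' C2'"
  using assms(4)
proof cases
  case (lam_suc \<kappa>')
  then show ?thesis
    using assms(1-3) step.lam_suc app_bisim_lift.Tmc by fastforce
next
  case lam_zero
  have "closed_at 0 (DLam u)"
    using assms(3) lam_zero closed_at_mono by fastforce
  then show ?thesis
    using assms(1,2) lam_zero step.lam_zero app_bisim_lift.Tmc by fastforce
next
  case appfun
  have "closed_astack ((u, \<kappa>) # \<rho>)"
    using assms(2,3) by (simp add: closed_astack_def)
  then show ?thesis
    using assms(1) appfun step.appfun app_bisim_lift.Ind by fastforce
next
  case (st_app t \<kappa>2 \<rho>')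
  have "closed_at (max \<kappa> \<kappa>2) (DApp t u)" and "closed_astack \<rho>'"
    using assms(2,3) st_app closed_at_mono[of \<kappa> u] closed_at_mono[of \<kappa>2 t]
    by (simp_all add: closed_astack_def)
  then show ?thesis
    using assms(1) st_app step.st_app app_bisim_lift.Tmc by fastforce
next
  case (st_done t e)
  moreover obtain s d where "\<sigma>2 = Clo s d"
    by (cases \<sigma>2)
  ultimately show ?thesis
    using assms(1,3) step.st_done app_bisim_lift.Ev by (fastforce simp: closed_tm_def)
qed

lemma app_bisim_lift_step:
  assumes "app_bisim_lift C1 C2" and "tau_star C1 C1'" and "step C1' (Lbl F) (Some C1'')"
  shows "\<exists>C2' C2''. tau_star C2 C2' \<and> step C2' (Lbl F) (Some C2'') \<and> app_bisim_lift C1'' C2''"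
  using assms(1)
proof cases
  case Ev
  then show ?thesis
    using app_bisim_lift_Ev_step assms(2,3) by blast
next
  case (Ind \<sigma>1 \<sigma>2 \<rho> n)
  then show ?thesis
    using app_bisim_lift_Ind_step assms(2,3) tau_star_Ind by blast
next
  case (Tmc \<sigma>1 \<sigma>2 \<rho> \<kappa> u)
  then show ?thesis
    using app_bisim_lift_Tmc_step assms(2,3) tau_star_Tmc by blast
qed

lemma mach_bisimulation_app_bisim_lift: "mach_bisimulation app_bisim_lift"
  unfolding mach_bisimulation_def
  using app_bisim_lift_sym app_bisim_lift_step no_terminating_step by blast

fun initial_conf :: "clo \<Rightarrow> conf" where
  "initial_conf (Clo t e) = Ev t e []"

lemma app_bisimulation_mach_bisim:
  "app_bisimulation
     (\<lambda>x y. closed_clo x \<and> closed_clo y \<and> mach_bisim (initial_conf x) (initial_conf y))"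
  unfolding app_bisimulation_def
proof (intro conjI allI impI)
  fix t e s d t' e'
  assume "closed_clo (Clo t e) \<and> closed_clo (Clo s d) \<and>
      mach_bisim (initial_conf (Clo t e)) (initial_conf (Clo s d))"
  then have closed: "closed_clo (Clo t e)" "closed_clo (Clo s d)"
    and bisim: "mach_bisim (Ev t e []) (Ev s d [])"
    by simp_all
  assume evaluates: "tau_star (Ev t e []) (Ev (DLam t') e' [])"
  obtain C2 C2' where "tau_star (Ev s d []) C2" "step C2 (Lbl FArg) (Some C2')"
    and "mach_bisim (Ind 0 [] (Clo t' e')) C2'"
    using mach_bisim_labelled_step[OF bisim evaluates st_arg] by blast
  then obtain s' d' where evaluates': "tau_star (Ev s d []) (Ev (DLam s') d' [])"
    and arg: "mach_bisim (Ind 0 [] (Clo t' e')) (Ind 0 [] (Clo s' d'))"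
    by (auto elim: step.cases)
  have "closed_clo (Clo t' (Clo u [] # e')) \<and> closed_clo (Clo s' (Clo u [] # d')) \<and>
      mach_bisim (Ev t' (Clo u [] # e') []) (Ev s' (Clo u [] # d') [])" if "closed_tm u" for u
    using closed_clo_value[OF closed(1) evaluates that]
      closed_clo_value[OF closed(2) evaluates' that] mach_bisim_apply_closed[OF arg that]
    by blast
  with evaluates' show "\<exists>s' d'. tau_star (Ev s d []) (Ev (DLam s') d' []) \<and>
      (\<forall>u. closed_tm u \<longrightarrow>
        closed_clo (Clo t' (Clo u [] # e')) \<and> closed_clo (Clo s' (Clo u [] # d')) \<and>
        mach_bisim (initial_conf (Clo t' (Clo u [] # e'))) (initial_conf (Clo s' (Clo u [] # d'))))"
    by auto
qed (auto intro: mach_bisim_sym)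

theorem theorem5p6:
  assumes "closed_clo (Clo t e)" and "closed_clo (Clo s d)"
  shows "app_bisim (Clo t e) (Clo s d) \<longleftrightarrow> mach_bisim (Ev t e []) (Ev s d [])"
proof
  assume "app_bisim (Clo t e) (Clo s d)"
  then have "app_bisim_lift (Ev t e []) (Ev s d [])"
    by (rule app_bisim_lift.Ev)
  then show "mach_bisim (Ev t e []) (Ev s d [])"
    using mach_bisimulation_app_bisim_lift mach_bisim_def by blast
next
  assume "mach_bisim (Ev t e []) (Ev s d [])"
  then show "app_bisim (Clo t e) (Clo s d)"
    using app_bisimulation_mach_bisim assms unfolding app_bisim_def by fastforce
qed

end
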